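(* Let $d\in\{1,2\}$ and let $Q,V:\mathbb{Z}^d\to\mathbb{R}$. Suppose $h_Q$ is bounded above, let $E_0=\sup\sigma(h_Q)$ be its ground-state energy, and suppose there is a bounded function $\psi:\mathbb{Z}^d\to(0,\infty)$ with $\sum_{|m-n|=1}\psi(m)+Q(n)\psi(n)=E_0\psi(n)$ for all $n\in\mathbb{Z}^d$. If both $h_{Q+V}\le E_0$ and $h_{Q-V}\le E_0$ (i.e. $\langle\phi|h_{Q\pm V}|\phi\rangle\le E_0\|\phi\|^2$ for all finitely supported $\phi$), then $V\equiv0$.
   Context: For $W:\mathbb{Z}^d\to\mathbb{R}$, $h_W$ denotes the discrete Schrödinger operator on $\ell^2(\mathbb{Z}^d)$, $[h_W\phi](n)=\sum_{m:\,|m-n|=1}\phi(m)+W(n)\phi(n)$ (sum over the $2d$ nearest neighbours), understood via its quadratic form on finitely supported sequences. In the discrete setting the ground-state energy is the supremum of the spectrum, and a ground state is a (pointwise) solution of $h_Q\psi=E_0\psi$ with $E_0$ the ground-state energy. *)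

theory Defs
  imports "HOL-Analysis.Analysis"
begin

text \<open>Lattice Z^d is modelled as int ^ 'd (d = CARD('d)).
  Nearest neighbours: l1-distance exactly 1.\<close>
definition nbr :: "int ^ 'd \<Rightarrow> int ^ 'd \<Rightarrow> bool" where
  "nbr m n \<longleftrightarrow> (\<Sum>i\<in>UNIV. \<bar>m $ i - n $ i\<bar>) = 1"

definition supp :: "(int ^ 'd \<Rightarrow> real) \<Rightarrow> (int ^ 'd) set" where
  "supp \<phi> = {n. \<phi> n \<noteq> 0}"

definition finsupp :: "(int ^ 'd \<Rightarrow> real) \<Rightarrow> bool" where
  "finsupp \<phi> \<longleftrightarrow> finite (supp \<phi>)"

definition hop :: "(int ^ 'd \<Rightarrow> real) \<Rightarrow> (int ^ 'd \<Rightarrow> real) \<Rightarrow> int ^ 'd \<Rightarrow> real" where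
  "hop W \<phi> n = (\<Sum>m\<in>{m. nbr m n}. \<phi> m) + W n * \<phi> n"

definition qform :: "(int ^ 'd \<Rightarrow> real) \<Rightarrow> (int ^ 'd \<Rightarrow> real) \<Rightarrow> real" where
  "qform W \<phi> = (\<Sum>n\<in>supp \<phi>. \<phi> n * hop W \<phi> n)"

definition sqnorm :: "(int ^ 'd \<Rightarrow> real) \<Rightarrow> real" where
  "sqnorm \<phi> = (\<Sum>n\<in>supp \<phi>. (\<phi> n)\<^sup>2)"

definition bounded_above_op :: "(int ^ 'd \<Rightarrow> real) \<Rightarrow> bool" where
  "bounded_above_op W \<longleftrightarrow> (\<exists>C. \<forall>\<phi>. finsupp \<phi> \<longrightarrow> qform W \<phi> \<le> C * sqnorm \<phi>)"

definition op_le :: "(int ^ 'd \<Rightarrow> real) \<Rightarrow> real \<Rightarrow> bool" where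
  "op_le W E \<longleftrightarrow> (\<forall>\<phi>. finsupp \<phi> \<longrightarrow> qform W \<phi> \<le> E * sqnorm \<phi>)"

text \<open>Ground-state energy sup sigma(h_W), via the variational (Rayleigh) characterisation
  on the form core of finitely supported sequences.\<close>
definition ground_energy :: "(int ^ 'd \<Rightarrow> real) \<Rightarrow> real" where
  "ground_energy W = (SUP \<phi>\<in>{\<phi>. finsupp \<phi> \<and> sqnorm \<phi> = 1}. qform W \<phi>)"

end

theory Submission
  imports Defs "HOL-Analysis.Harmonic_Numbers" "HOL-Real_Asymp.Real_Asymp"
begin

text \<open>Write \<open>gap \<phi> = E \<parallel>\<phi>\<parallel>\<^sup>2 - \<langle>\<phi>, h\<^sub>Q \<phi>\<rangle>\<close>. The two form bounds say exactly
  \<open>\<bar>\<Sum> V \<phi>\<^sup>2\<bar> \<le> gap \<phi>\<close>. For \<open>\<phi> = \<psi> f\<close> the ground state representation gives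
  \<open>2 gap (\<psi> f) = \<Sum>\<^bsub>n ~ m\<^esub> \<psi> n \<psi> m (f n - f m)\<^sup>2\<close>, and because the lattice is recurrent
  for \<open>d \<le> 2\<close> there are finitely supported \<open>f\<close>, equal to 1 near a given site \<open>n\<^sub>0\<close>,
  with arbitrarily small Dirichlet energy (a cutoff built from harmonic numbers of the
  l1-distance to \<open>n\<^sub>0\<close>). Raising such a trial function at \<open>n\<^sub>0\<close> by \<open>t \<psi> n\<^sub>0\<close> changes
  \<open>\<Sum> V \<phi>\<^sup>2\<close> by \<open>(2t + t\<^sup>2) V n\<^sub>0 (\<psi> n\<^sub>0)\<^sup>2\<close> but the gap only by \<open>O(t\<^sup>2)\<close>, because
  \<open>\<psi>\<close> solves the eigenvalue equation at \<open>n\<^sub>0\<close>. Letting the gap tend to 0 and then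
  \<open>t\<close> tend to 0 forces \<open>V n\<^sub>0 = 0\<close>.\<close>

section \<open>Nearest neighbours and l1-spheres\<close>

definition neighbours :: "int ^ 'd \<Rightarrow> (int ^ 'd) set" where
  "neighbours n = {m. nbr m n}"

definition l1_norm :: "int ^ 'd \<Rightarrow> int" where
  "l1_norm v = (\<Sum>i\<in>UNIV. \<bar>v $ i\<bar>)"

lemma nbr_sym: "nbr m n \<longleftrightarrow> nbr n m"
  unfolding nbr_def by (simp add: abs_minus_commute)

lemma nbr_imp_axis_step:
  assumes "nbr m n"
  shows "\<exists>k s. s \<in> {-1, 1} \<and> m = n + (\<chi> j. if j = k then s else 0)"
proof -
  have one: "(\<Sum>i\<in>UNIV. \<bar>m $ i - n $ i\<bar>) = 1"
    using assms by (simp add: nbr_def)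
  have "\<exists>k. m $ k \<noteq> n $ k"
  proof (rule ccontr)
    assume "\<nexists>k. m $ k \<noteq> n $ k"
    then show False
      using one by simp
  qed
  then obtain k where k: "m $ k \<noteq> n $ k" ..
  have split: "(\<Sum>i\<in>UNIV. \<bar>m $ i - n $ i\<bar>) = \<bar>m $ k - n $ k\<bar> + (\<Sum>i\<in>UNIV - {k}. \<bar>m $ i - n $ i\<bar>)"
    by (simp add: sum.remove)
  have "(\<Sum>i\<in>UNIV - {k}. \<bar>m $ i - n $ i\<bar>) \<ge> 0"
    by (simp add: sum_nonneg)
  with one split k have step: "\<bar>m $ k - n $ k\<bar> = 1" and rest: "(\<Sum>i\<in>UNIV - {k}. \<bar>m $ i - n $ i\<bar>) = 0"
    by linarith+
  from rest have "\<forall>i\<in>UNIV - {k}. m $ i = n $ i"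
    by (subst (asm) sum_nonneg_eq_0_iff) auto
  then have "m = n + (\<chi> j. if j = k then m $ k - n $ k else 0)"
    by (auto simp: vec_eq_iff)
  moreover have "m $ k - n $ k \<in> {-1, 1}"
    using step by auto
  ultimately show ?thesis
    by blast
qed

lemma neighbours_subset_axis_steps:
  "neighbours n \<subseteq> (\<lambda>(k, s). n + (\<chi> j. if j = k then s else 0)) ` (UNIV \<times> {-1, 1})"
  using nbr_imp_axis_step unfolding neighbours_def by fastforce

lemma finite_neighbours [simp]: "finite (neighbours n)"
  by (rule finite_subset[OF neighbours_subset_axis_steps]) auto

lemma card_neighbours_le: "card (neighbours (n :: int ^ 'd)) \<le> 2 * CARD('d)"
proof -
  have "card (neighbours n) \<le> card (UNIV \<times> {-1, 1 :: int} :: ('d \<times> int) set)"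
    by (rule order_trans[OF card_mono[OF _ neighbours_subset_axis_steps] card_image_le]) auto
  then show ?thesis
    by (simp add: card_cartesian_product)
qed

lemma not_neighbour_self [simp]: "n \<notin> neighbours n"
  by (simp add: neighbours_def nbr_def)

lemma l1_norm_nonneg: "l1_norm v \<ge> 0"
  unfolding l1_norm_def by (simp add: sum_nonneg)

lemma nbr_l1_norm_diff_le:
  assumes "nbr m n"
  shows "\<bar>l1_norm (m - c) - l1_norm (n - c)\<bar> \<le> 1"
proof -
  have "l1_norm (m - c) \<le> l1_norm (n - c) + (\<Sum>i\<in>UNIV. \<bar>m $ i - n $ i\<bar>)"
       "l1_norm (n - c) \<le> l1_norm (m - c) + (\<Sum>i\<in>UNIV. \<bar>m $ i - n $ i\<bar>)"
    unfolding l1_norm_def sum.distrib[symmetric] by (rule sum_mono, simp)+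
  with assms show ?thesis
    unfolding nbr_def by linarith
qed

text \<open>A point of the sphere is determined by its \<open>i\<close>-th coordinate and the sign of its
  \<open>j\<close>-th one; \<open>i = j\<close> is allowed, which covers dimension one.\<close>

lemma l1_sphere_subset:
  fixes c :: "int ^ 'd"
  assumes "UNIV = {i, j :: 'd}"
  shows "{n. l1_norm (n - c) = int k}
    \<subseteq> (\<lambda>(a, s). c + (\<chi> l. if l = i then a else s * (int k - \<bar>a\<bar>))) ` ({- int k .. int k} \<times> {-1, 1})"
    (is "_ \<subseteq> ?g ` ?A")
proof
  fix n assume "n \<in> {n. l1_norm (n - c) = int k}"
  then have norm: "l1_norm (n - c) = int k" by simp
  define a where "a = (n - c) $ i"
  define s where "s = (if (n - c) $ j \<ge> 0 then 1 else - 1 :: int)"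
  have "\<bar>a\<bar> \<le> l1_norm (n - c)"
    unfolding a_def l1_norm_def by (rule member_le_sum) auto
  then have a: "a \<in> {- int k .. int k}"
    using norm by auto
  have "n $ l = c $ l + (if l = i then a else s * (int k - \<bar>a\<bar>))" for l
  proof (cases "l = i")
    case False
    then have "l = j" "i \<noteq> j"
      using assms by auto
    then have "l1_norm (n - c) = \<bar>a\<bar> + \<bar>(n - c) $ j\<bar>"
      unfolding l1_norm_def a_def assms by simp
    with norm False \<open>l = j\<close> show ?thesis
      unfolding s_def by auto
  qed (simp add: a_def)
  then have "n = ?g (a, s)"
    by (simp add: vec_eq_iff)
  moreover have "(a, s) \<in> ?A"
    using a unfolding s_def by auto
  ultimately show "n \<in> ?g ` ?A"
    by blast
qed

lemma l1_sphere_finite_card_le: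
  fixes c :: "int ^ 'd"
  assumes "CARD('d) \<le> 2"
  shows "finite {n. l1_norm (n - c) = int k} \<and> card {n. l1_norm (n - c) = int k} \<le> 4 * k + 2"
proof -
  obtain i j :: 'd where "UNIV = {i, j}"
  proof (cases "CARD('d) = 1")
    case True
    then obtain i :: 'd where "UNIV = {i}"
      by (auto simp: card_1_singleton_iff)
    then show ?thesis using that[of i i] by simp
  next
    case False
    have "0 < CARD('d)"
      by (rule finite_UNIV_card_ge_0) simp
    then have "CARD('d) = 2"
      using assms False by linarith
    then show ?thesis
      using that card_2_iff[where 'a='d] by auto
  qed
  note sub = l1_sphere_subset[OF this, of c k]
  have "card {n. l1_norm (n - c) = int k} \<le> card ({- int k .. int k} \<times> {-1, 1 :: int})"
    by (rule order_trans[OF card_mono[OF _ sub] card_image_le]) auto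
  also have "\<dots> = 4 * k + 2"
    by (simp add: card_cartesian_product)
  finally show ?thesis
    using finite_subset[OF sub] by auto
qed

section \<open>Quadratic forms under a change at one site\<close>

definition potential_form :: "(int ^ 'd \<Rightarrow> real) \<Rightarrow> (int ^ 'd \<Rightarrow> real) \<Rightarrow> real" where
  "potential_form V \<phi> = (\<Sum>n\<in>supp \<phi>. V n * (\<phi> n)\<^sup>2)"

definition energy_gap :: "real \<Rightarrow> (int ^ 'd \<Rightarrow> real) \<Rightarrow> (int ^ 'd \<Rightarrow> real) \<Rightarrow> real" where
  "energy_gap E Q \<phi> = E * sqnorm \<phi> - qform Q \<phi>"

lemma hop_neighbours: "hop W \<phi> n = (\<Sum>m\<in>neighbours n. \<phi> m) + W n * \<phi> n"
  by (simp add: hop_def neighbours_def)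

lemma hop_cong_local:
  assumes "\<phi> n = \<eta> n" and "\<forall>m\<in>neighbours n. \<phi> m = \<eta> m"
  shows "hop W \<phi> n = hop W \<eta> n"
  using assms by (simp add: hop_neighbours)

lemma hop_add_scaled: "hop W (\<lambda>m. \<phi> m + s * \<eta> m) n = hop W \<phi> n + s * hop W \<eta> n"
  by (simp add: hop_neighbours sum.distrib sum_distrib_left algebra_simps)

lemma sum_supp_superset:
  assumes "finite S" "supp \<phi> \<subseteq> S" "\<And>n. \<phi> n = 0 \<Longrightarrow> g n = 0"
  shows "(\<Sum>n\<in>supp \<phi>. g n) = (\<Sum>n\<in>S. g n)"
  by (rule sum.mono_neutral_left) (use assms in \<open>auto simp: supp_def\<close>)

lemma qform_superset: "finite S \<Longrightarrow> supp \<phi> \<subseteq> S \<Longrightarrow> qform W \<phi> = (\<Sum>n\<in>S. \<phi> n * hop W \<phi> n)"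
  unfolding qform_def by (rule sum_supp_superset) auto

lemma potential_form_superset:
  "finite S \<Longrightarrow> supp \<phi> \<subseteq> S \<Longrightarrow> potential_form V \<phi> = (\<Sum>n\<in>S. V n * (\<phi> n)\<^sup>2)"
  unfolding potential_form_def by (rule sum_supp_superset) auto

lemma sqnorm_eq_potential_form: "sqnorm \<phi> = potential_form (\<lambda>_. 1) \<phi>"
  by (simp add: sqnorm_def potential_form_def)

lemma qform_add_potential: "qform (\<lambda>n. Q n + V n) \<phi> = qform Q \<phi> + potential_form V \<phi>"
  unfolding qform_def potential_form_def hop_def
  by (simp add: sum.distrib[symmetric] algebra_simps power2_eq_square)

lemma qform_diff_potential: "qform (\<lambda>n. Q n - V n) \<phi> = qform Q \<phi> - potential_form V \<phi>"
  unfolding qform_def potential_form_def hop_def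
  by (simp add: sum_subtractf[symmetric] algebra_simps power2_eq_square)

lemma abs_potential_form_le_energy_gap:
  assumes "op_le (\<lambda>n. Q n + V n) E" "op_le (\<lambda>n. Q n - V n) E" "finsupp \<phi>"
  shows "\<bar>potential_form V \<phi>\<bar> \<le> energy_gap E Q \<phi>"
proof -
  have "qform (\<lambda>n. Q n + V n) \<phi> \<le> E * sqnorm \<phi>" "qform (\<lambda>n. Q n - V n) \<phi> \<le> E * sqnorm \<phi>"
    using assms unfolding op_le_def by blast+
  then show ?thesis
    unfolding energy_gap_def qform_add_potential qform_diff_potential by linarith
qed

lemma sum_neighbours_eq_sum_nbr:
  assumes "finite T" "\<And>m. m \<in> neighbours n \<Longrightarrow> m \<notin> T \<Longrightarrow> h m = 0"
  shows "(\<Sum>m\<in>neighbours n. h m) = (\<Sum>m\<in>T. if nbr m n then h m else 0)"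
proof -
  have "(\<Sum>m\<in>neighbours n. h m) = (\<Sum>m\<in>{m \<in> T. nbr m n}. h m)"
    by (rule sum.mono_neutral_right) (use assms finite_neighbours[of n] in \<open>auto simp: neighbours_def\<close>)
  also have "\<dots> = (\<Sum>m\<in>T. if nbr m n then h m else 0)"
    by (rule sum.inter_filter[OF \<open>finite T\<close>])
  finally show ?thesis .
qed

lemma sum_neighbour_pairs_swap:
  assumes "finite T"
    and "\<And>n m. n \<in> T \<Longrightarrow> m \<in> neighbours n \<Longrightarrow> m \<notin> T \<Longrightarrow> g n m = 0 \<and> g m n = 0"
  shows "(\<Sum>n\<in>T. \<Sum>m\<in>neighbours n. g n m) = (\<Sum>n\<in>T. \<Sum>m\<in>neighbours n. g m n)"
proof -
  have "(\<Sum>n\<in>T. \<Sum>m\<in>neighbours n. g n m) = (\<Sum>n\<in>T. \<Sum>m\<in>T. if nbr m n then g n m else 0)"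
    using assms by (intro sum.cong refl sum_neighbours_eq_sum_nbr) auto
  also have "\<dots> = (\<Sum>m\<in>T. \<Sum>n\<in>T. if nbr m n then g n m else 0)"
    by (rule sum.swap)
  also have "\<dots> = (\<Sum>m\<in>T. \<Sum>n\<in>T. if nbr n m then g n m else 0)"
    by (simp add: nbr_sym)
  also have "\<dots> = (\<Sum>m\<in>T. \<Sum>n\<in>neighbours m. g n m)"
    using assms by (intro sum.cong refl sum_neighbours_eq_sum_nbr[symmetric]) auto
  finally show ?thesis .
qed

lemma sum_hop_symmetric:
  assumes "finite S" "supp \<phi> \<subseteq> S" "supp \<eta> \<subseteq> S"
  shows "(\<Sum>n\<in>S. \<phi> n * hop W \<eta> n) = (\<Sum>n\<in>S. \<eta> n * hop W \<phi> n)"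
proof -
  have vanish: "\<phi> m = 0" "\<eta> m = 0" if "m \<notin> S" for m
    using assms that by (auto simp: supp_def)
  have "(\<Sum>n\<in>S. \<Sum>m\<in>neighbours n. \<phi> n * \<eta> m) = (\<Sum>n\<in>S. \<Sum>m\<in>neighbours n. \<phi> m * \<eta> n)"
    by (rule sum_neighbour_pairs_swap) (use assms vanish in auto)
  then show ?thesis
    by (simp add: hop_neighbours algebra_simps sum.distrib sum_distrib_left)
qed

lemma qform_point_update:
  assumes "finsupp \<phi>"
  shows "qform W (\<phi>(n0 := \<phi> n0 + s)) = qform W \<phi> + 2 * s * hop W \<phi> n0 + s\<^sup>2 * W n0"
proof -
  define \<delta> where "\<delta> n = (if n = n0 then 1 else 0 :: real)" for n
  define S where "S = insert n0 (supp \<phi>)"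
  have S: "finite S" "supp \<phi> \<subseteq> S" "supp \<delta> \<subseteq> S" "n0 \<in> S"
    using assms unfolding S_def finsupp_def supp_def \<delta>_def by auto
  have update: "\<phi>(n0 := \<phi> n0 + s) = (\<lambda>n. \<phi> n + s * \<delta> n)"
    by (auto simp: \<delta>_def)
  have "supp (\<lambda>n. \<phi> n + s * \<delta> n) \<subseteq> S"
    unfolding S_def supp_def \<delta>_def by auto
  have eval_at: "(\<Sum>n\<in>S. \<delta> n * g n) = g n0" for g
    using S(1,4) by (simp add: \<delta>_def if_distrib[of "\<lambda>x. x * _"] cong: if_cong)
  have "hop W \<delta> n0 = W n0"
    by (simp add: hop_neighbours \<delta>_def)
  have "qform W (\<lambda>n. \<phi> n + s * \<delta> n)
      = (\<Sum>n\<in>S. \<phi> n * hop W \<phi> n) + s * (\<Sum>n\<in>S. \<phi> n * hop W \<delta> n)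
        + s * (\<Sum>n\<in>S. \<delta> n * hop W \<phi> n) + s\<^sup>2 * (\<Sum>n\<in>S. \<delta> n * hop W \<delta> n)"
    using qform_superset[OF S(1) \<open>supp (\<lambda>n. \<phi> n + s * \<delta> n) \<subseteq> S\<close>]
    by (simp add: hop_add_scaled algebra_simps power2_eq_square sum.distrib sum_distrib_left)
  also have "(\<Sum>n\<in>S. \<phi> n * hop W \<delta> n) = (\<Sum>n\<in>S. \<delta> n * hop W \<phi> n)"
    by (rule sum_hop_symmetric[OF S(1-3)])
  finally show ?thesis
    unfolding update qform_superset[OF S(1,2)] eval_at \<open>hop W \<delta> n0 = W n0\<close> by simp
qed

lemma potential_form_point_update:
  assumes "finsupp \<phi>"
  shows "potential_form V (\<phi>(n0 := \<phi> n0 + s)) = potential_form V \<phi> + V n0 * (2 * s * \<phi> n0 + s\<^sup>2)"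
proof -
  define S where "S = insert n0 (supp \<phi>)"
  have S: "finite S" "supp \<phi> \<subseteq> S" "supp (\<phi>(n0 := \<phi> n0 + s)) \<subseteq> S" "n0 \<in> S"
    using assms unfolding S_def finsupp_def supp_def by auto
  have "(\<Sum>n\<in>S. V n * ((\<phi>(n0 := \<phi> n0 + s)) n)\<^sup>2)
      = V n0 * (\<phi> n0 + s)\<^sup>2 + (\<Sum>n\<in>S - {n0}. V n * (\<phi> n)\<^sup>2)"
    using S(1,4) by (simp add: sum.remove)
  also have "\<dots> = (\<Sum>n\<in>S. V n * (\<phi> n)\<^sup>2) + V n0 * (2 * s * \<phi> n0 + s\<^sup>2)"
    using S(1,4) by (simp add: sum.remove power2_eq_square algebra_simps)
  finally show ?thesis
    unfolding potential_form_superset[OF S(1,2)] potential_form_superset[OF S(1,3)] .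
qed

lemma energy_gap_point_update:
  assumes "finsupp \<phi>"
  shows "energy_gap E Q (\<phi>(n0 := \<phi> n0 + s))
    = energy_gap E Q \<phi> + 2 * s * (E * \<phi> n0 - hop Q \<phi> n0) + s\<^sup>2 * (E - Q n0)"
  unfolding energy_gap_def sqnorm_eq_potential_form
    potential_form_point_update[OF assms] qform_point_update[OF assms]
  by (simp add: algebra_simps)

section \<open>The ground state representation\<close>

definition covers :: "(int ^ 'd) set \<Rightarrow> (int ^ 'd \<Rightarrow> real) \<Rightarrow> bool" where
  "covers T f \<longleftrightarrow> finite T \<and> (\<forall>n\<in>supp f. n \<in> T \<and> neighbours n \<subseteq> T)"

lemma ground_state_representation:
  assumes ground: "\<forall>n. hop Q \<psi> n = E * \<psi> n" and T: "covers T f"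
  shows "2 * energy_gap E Q (\<lambda>n. \<psi> n * f n)
    = (\<Sum>n\<in>T. \<Sum>m\<in>neighbours n. \<psi> n * \<psi> m * (f n - f m)\<^sup>2)"
proof -
  define G where "G n m = \<psi> n * \<psi> m * (f n * (f n - f m))" for n m
  have fin: "finite T" and outside: "\<And>n. n \<notin> T \<Longrightarrow> f n = 0"
    and boundary: "\<And>n m. m \<in> neighbours n \<Longrightarrow> m \<notin> T \<Longrightarrow> f n = 0"
    using T unfolding covers_def supp_def by auto
  have supp: "supp (\<lambda>n. \<psi> n * f n) \<subseteq> T"
    using outside by (auto simp: supp_def)
  have local: "E * (\<psi> n * f n)\<^sup>2 - \<psi> n * f n * hop Q (\<lambda>n. \<psi> n * f n) n = (\<Sum>m\<in>neighbours n. G n m)" for n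
  proof -
    have nsum: "E * \<psi> n - Q n * \<psi> n = (\<Sum>m\<in>neighbours n. \<psi> m)"
      using ground by (simp add: hop_neighbours algebra_simps)
    have "E * (\<psi> n * f n)\<^sup>2 - \<psi> n * f n * hop Q (\<lambda>n. \<psi> n * f n) n
        = \<psi> n * f n * (f n * (E * \<psi> n - Q n * \<psi> n) - (\<Sum>m\<in>neighbours n. \<psi> m * f m))"
      by (simp add: hop_neighbours algebra_simps power2_eq_square)
    also have "\<dots> = \<psi> n * f n * (f n * (\<Sum>m\<in>neighbours n. \<psi> m) - (\<Sum>m\<in>neighbours n. \<psi> m * f m))"
      by (simp only: nsum)
    also have "\<dots> = (\<Sum>m\<in>neighbours n. G n m)"
      by (simp add: G_def sum_distrib_left sum_subtractf[symmetric] algebra_simps)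
    finally show ?thesis .
  qed
  have "energy_gap E Q (\<lambda>n. \<psi> n * f n) = (\<Sum>n\<in>T. \<Sum>m\<in>neighbours n. G n m)"
    unfolding energy_gap_def sqnorm_eq_potential_form potential_form_superset[OF fin supp]
      qform_superset[OF fin supp] sum_distrib_left sum_subtractf[symmetric]
    by (simp add: local)
  moreover have "(\<Sum>n\<in>T. \<Sum>m\<in>neighbours n. G n m) = (\<Sum>n\<in>T. \<Sum>m\<in>neighbours n. G m n)"
    by (rule sum_neighbour_pairs_swap[OF fin]) (simp add: G_def outside boundary)
  ultimately have "2 * energy_gap E Q (\<lambda>n. \<psi> n * f n) = (\<Sum>n\<in>T. \<Sum>m\<in>neighbours n. G n m + G m n)"
    by (simp add: sum.distrib)
  also have "\<dots> = (\<Sum>n\<in>T. \<Sum>m\<in>neighbours n. \<psi> n * \<psi> m * (f n - f m)\<^sup>2)"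
    by (simp add: G_def algebra_simps power2_eq_square)
  finally show ?thesis .
qed

lemma energy_gap_le_dirichlet:
  assumes ground: "\<forall>n. hop Q \<psi> n = E * \<psi> n" and T: "covers T f"
    and bounds: "\<forall>n. 0 \<le> \<psi> n \<and> \<psi> n \<le> B"
  shows "energy_gap E Q (\<lambda>n. \<psi> n * f n) \<le> B\<^sup>2 / 2 * (\<Sum>n\<in>T. \<Sum>m\<in>neighbours n. (f n - f m)\<^sup>2)"
proof -
  have "0 \<le> B"
    using bounds order_trans by blast
  then have "\<psi> n * \<psi> m \<le> B\<^sup>2" for n m
    using bounds by (simp add: power2_eq_square mult_mono)
  then have "(\<Sum>n\<in>T. \<Sum>m\<in>neighbours n. \<psi> n * \<psi> m * (f n - f m)\<^sup>2)
      \<le> (\<Sum>n\<in>T. \<Sum>m\<in>neighbours n. B\<^sup>2 * (f n - f m)\<^sup>2)"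
    by (intro sum_mono mult_right_mono) auto
  also have "\<dots> = B\<^sup>2 * (\<Sum>n\<in>T. \<Sum>m\<in>neighbours n. (f n - f m)\<^sup>2)"
    by (simp add: sum_distrib_left)
  finally show ?thesis
    unfolding ground_state_representation[OF ground T, symmetric] by simp
qed

section \<open>A harmonic cutoff in dimension at most two\<close>

text \<open>The discrete counterpart of the logarithmic cutoff \<open>log (M / k) / log M\<close>.\<close>

definition harm_cutoff :: "nat \<Rightarrow> nat \<Rightarrow> real" where
  "harm_cutoff M k = max 0 (min 1 ((harm M - harm k) / (harm M - 1)))"

definition harm_cutoff_slope :: "nat \<Rightarrow> nat \<Rightarrow> real" where
  "harm_cutoff_slope M k = (if 0 < k \<and> k \<le> M then 1 / (real k * (harm M - 1)) else 0)"

lemma harm_gt_one: "2 \<le> M \<Longrightarrow> harm M > (1 :: real)"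
  using harm_mono[of 2 M, where 'a = real] by (simp add: harm_def numeral_2_eq_2)

lemma harm_cutoff_eq_1: "2 \<le> M \<Longrightarrow> k \<le> 1 \<Longrightarrow> harm_cutoff M k = 1"
proof -
  assume "2 \<le> M" "k \<le> 1"
  then have "harm k \<le> (1 :: real)" and "harm M > (1 :: real)"
    using harm_gt_one by (cases k; simp add: harm_def)+
  then show ?thesis
    unfolding harm_cutoff_def by (simp add: field_simps)
qed

lemma harm_cutoff_eq_0: "2 \<le> M \<Longrightarrow> M \<le> k \<Longrightarrow> harm_cutoff M k = 0"
  using harm_gt_one[of M] harm_mono[of M k, where 'a = real]
  unfolding harm_cutoff_def by (simp add: divide_nonpos_pos)

lemma abs_harm_cutoff_Suc_le:
  assumes "2 \<le> M"
  shows "\<bar>harm_cutoff M k - harm_cutoff M (Suc k)\<bar> \<le> (if k < M then 1 / (real (Suc k) * (harm M - 1)) else 0)"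
proof (cases "k < M")
  case True
  have clamp_lipschitz: "\<bar>max 0 (min 1 x) - max 0 (min 1 y)\<bar> \<le> \<bar>x - y\<bar>" for x y :: real
    by (auto simp: max_def min_def abs_if)
  have "\<bar>harm_cutoff M k - harm_cutoff M (Suc k)\<bar>
      \<le> \<bar>(harm M - harm k) / (harm M - 1) - (harm M - harm (Suc k)) / (harm M - 1)\<bar>"
    unfolding harm_cutoff_def by (rule clamp_lipschitz)
  also have "\<dots> = \<bar>(harm (Suc k) - harm k) / (harm M - 1)\<bar>"
    by (simp add: diff_divide_distrib)
  also have "\<dots> = 1 / (real (Suc k) * (harm M - 1))"
    using harm_gt_one[OF assms] by (simp add: harm_Suc divide_inverse)
  finally show ?thesis
    using True by simp
next
  case False
  then show ?thesis
    using harm_cutoff_eq_0[OF assms] by simp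
qed

lemma abs_harm_cutoff_diff_le_slope:
  assumes "2 \<le> M" and "\<bar>int a - int b\<bar> \<le> 1"
  shows "\<bar>harm_cutoff M a - harm_cutoff M b\<bar> \<le> harm_cutoff_slope M a"
proof -
  have L: "harm M - 1 > (0 :: real)"
    using harm_gt_one[OF assms(1)] by simp
  have "b = a \<or> b = Suc a \<or> (1 \<le> a \<and> b = a - 1)"
    using assms(2) by arith
  then consider "b = a" | "b = Suc a" | c where "a = Suc c" "b = c"
    by (metis Suc_diff_1 less_eq_Suc_le One_nat_def)
  then show ?thesis
  proof cases
    case 1
    then show ?thesis
      using L by (simp add: harm_cutoff_slope_def)
  next
    case 2
    show ?thesis
    proof (cases "a = 0")
      case True
      then show ?thesis
        using 2 harm_cutoff_eq_1[OF assms(1)] by (simp add: harm_cutoff_slope_def)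
    next
      case False
      have "\<bar>harm_cutoff M a - harm_cutoff M b\<bar> \<le> (if a < M then 1 / (real (Suc a) * (harm M - 1)) else 0)"
        using abs_harm_cutoff_Suc_le[OF assms(1), of a] 2 by simp
      also have "\<dots> \<le> harm_cutoff_slope M a"
        using L False by (auto simp: harm_cutoff_slope_def frac_le)
      finally show ?thesis .
    qed
  next
    case 3
    have "\<bar>harm_cutoff M a - harm_cutoff M b\<bar> = \<bar>harm_cutoff M c - harm_cutoff M (Suc c)\<bar>"
      using 3 by (simp add: abs_minus_commute)
    also have "\<dots> \<le> (if c < M then 1 / (real (Suc c) * (harm M - 1)) else 0)"
      by (rule abs_harm_cutoff_Suc_le[OF assms(1)])
    also have "\<dots> = harm_cutoff_slope M a"
      using 3 by (simp add: harm_cutoff_slope_def)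
    finally show ?thesis .
  qed
qed

lemma sum_harm_cutoff_slope_le:
  "(\<Sum>k\<le>M. (4 * real k + 2) * (harm_cutoff_slope M k)\<^sup>2) \<le> 6 * harm M / (harm M - 1)\<^sup>2"
proof -
  have term_le: "(4 * real k + 2) * (harm_cutoff_slope M k)\<^sup>2 \<le> 6 / (harm M - 1)\<^sup>2 * (1 / real k)"
    if "k \<in> {1..M}" for k
  proof -
    have k: "1 \<le> real k"
      using that by simp
    have "(4 * real k + 2) * (harm_cutoff_slope M k)\<^sup>2 \<le> 6 * real k * (1 / (real k * (harm M - 1)))\<^sup>2"
      using that k by (simp add: harm_cutoff_slope_def mult_right_mono)
    also have "\<dots> = 6 / (harm M - 1)\<^sup>2 * (1 / real k)"
      using k by (simp add: power2_eq_square)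
    finally show ?thesis .
  qed
  have "(\<Sum>k\<le>M. (4 * real k + 2) * (harm_cutoff_slope M k)\<^sup>2)
      = (\<Sum>k\<in>{1..M}. (4 * real k + 2) * (harm_cutoff_slope M k)\<^sup>2)"
    by (rule sum.mono_neutral_right) (auto simp: harm_cutoff_slope_def)
  also have "\<dots> \<le> (\<Sum>k\<in>{1..M}. 6 / (harm M - 1)\<^sup>2 * (1 / real k))"
    by (rule sum_mono) (rule term_le)
  also have "\<dots> = 6 * harm M / (harm M - 1)\<^sup>2"
    by (simp add: harm_def sum_distrib_left[symmetric] divide_inverse)
  finally show ?thesis .
qed

lemma l1_ball_finite_sum_le:
  fixes c :: "int ^ 'd" and g :: "nat \<Rightarrow> real"
  assumes dim: "CARD('d) \<le> 2" and "\<forall>k. 0 \<le> g k"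
  shows "finite {n. l1_norm (n - c) \<le> int M}"
    and "(\<Sum>n | l1_norm (n - c) \<le> int M. g (nat (l1_norm (n - c)))) \<le> (\<Sum>k\<le>M. (4 * real k + 2) * g k)"
proof -
  define r where "r n = nat (l1_norm (n - c))" for n
  define T where "T = {n. l1_norm (n - c) \<le> int M}"
  have r_int: "int (r n) = l1_norm (n - c)" for n
    unfolding r_def using l1_norm_nonneg by simp
  have sphere: "{n \<in> T. r n = k} = {n. l1_norm (n - c) = int k}" if "k \<le> M" for k
    using that unfolding T_def by (auto simp flip: r_int)
  have "T = (\<Union>k\<le>M. {n \<in> T. r n = k})"
    unfolding T_def by (auto simp flip: r_int)
  then have "finite T"
    by (simp add: sphere l1_sphere_finite_card_le[OF dim])
  then show "finite {n. l1_norm (n - c) \<le> int M}"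
    unfolding T_def .
  from \<open>finite T\<close> have "(\<Sum>n\<in>T. g (r n)) = (\<Sum>k\<le>M. \<Sum>n\<in>{n \<in> T. r n = k}. g (r n))"
    by (intro sum.group[symmetric]) (auto simp: T_def simp flip: r_int)
  also have "\<dots> = (\<Sum>k\<le>M. \<Sum>n\<in>{n \<in> T. r n = k}. g k)"
    by (intro sum.cong refl) auto
  also have "\<dots> = (\<Sum>k\<le>M. real (card {n. l1_norm (n - c) = int k}) * g k)"
    by (intro sum.cong refl) (simp add: sphere)
  also have "\<dots> \<le> (\<Sum>k\<le>M. (4 * real k + 2) * g k)"
  proof (intro sum_mono mult_right_mono)
    show "real (card {n. l1_norm (n - c) = int k}) \<le> 4 * real k + 2" for k
      using l1_sphere_finite_card_le[OF dim, of c k] by linarith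
  qed (use assms(2) in auto)
  finally show "(\<Sum>n | l1_norm (n - c) \<le> int M. g (nat (l1_norm (n - c)))) \<le> (\<Sum>k\<le>M. (4 * real k + 2) * g k)"
    unfolding T_def r_def .
qed

text \<open>This is where \<open>d \<le> 2\<close> enters: spheres of radius \<open>k\<close> have at most \<open>4 k + 2\<close> points,
  so the Dirichlet energy is \<open>O(H\<^sub>M)\<close> against the normalisation \<open>(H\<^sub>M - 1)\<^sup>2\<close>.\<close>

lemma lattice_harm_cutoff_dirichlet_le:
  fixes c :: "int ^ 'd"
  assumes dim: "CARD('d) \<le> 2" and M: "2 \<le> M"
  defines "f \<equiv> \<lambda>n. harm_cutoff M (nat (l1_norm (n - c)))"
    and "T \<equiv> {n. l1_norm (n - c) \<le> int M}"
  shows "covers T f"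
    and "(\<Sum>n\<in>T. \<Sum>m\<in>neighbours n. (f n - f m)\<^sup>2) \<le> 24 * harm M / (harm M - 1)\<^sup>2"
proof -
  define r where "r n = nat (l1_norm (n - c))" for n
  have T_r: "n \<in> T \<longleftrightarrow> r n \<le> M" for n
    unfolding T_def r_def by (simp add: nat_le_iff)
  have r_nbr: "\<bar>int (r n) - int (r m)\<bar> \<le> 1" if "m \<in> neighbours n" for n m
    using nbr_l1_norm_diff_le[of m n c] l1_norm_nonneg[of "n - c"] l1_norm_nonneg[of "m - c"] that
    unfolding r_def neighbours_def by simp
  have inner: "r n < M" if "n \<in> supp f" for n
    using that harm_cutoff_eq_0[OF M, of "r n"] unfolding supp_def f_def r_def by fastforce
  show "covers T f"
    unfolding covers_def
  proof (intro conjI ballI subsetI)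
    show "finite T"
      unfolding T_def by (rule l1_ball_finite_sum_le(1)[OF dim, of "\<lambda>_. 0"]) simp
    fix n m assume n: "n \<in> supp f"
    then show "n \<in> T"
      using inner T_r by fastforce
    assume "m \<in> neighbours n"
    with n show "m \<in> T"
      using inner[OF n] r_nbr T_r by fastforce
  qed
  have edge: "(f n - f m)\<^sup>2 \<le> (harm_cutoff_slope M (r n))\<^sup>2" if "m \<in> neighbours n" for n m
  proof -
    have "\<bar>f n - f m\<bar> \<le> harm_cutoff_slope M (r n)"
      unfolding f_def r_def[symmetric] by (rule abs_harm_cutoff_diff_le_slope[OF M r_nbr[OF that]])
    then have "\<bar>f n - f m\<bar>\<^sup>2 \<le> (harm_cutoff_slope M (r n))\<^sup>2"
      by (rule power_mono) simp
    then show ?thesis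
      by simp
  qed
  have "(\<Sum>m\<in>neighbours n. (f n - f m)\<^sup>2) \<le> 4 * (harm_cutoff_slope M (r n))\<^sup>2" for n :: "int ^ 'd"
  proof -
    have "card (neighbours n) \<le> 4"
      using card_neighbours_le[of n] dim by linarith
    then have "real (card (neighbours n)) * (harm_cutoff_slope M (r n))\<^sup>2 \<le> 4 * (harm_cutoff_slope M (r n))\<^sup>2"
      by (intro mult_right_mono) auto
    then show ?thesis
      using sum_bounded_above[of "neighbours n" "\<lambda>m. (f n - f m)\<^sup>2", OF edge] by linarith
  qed
  then have "(\<Sum>n\<in>T. \<Sum>m\<in>neighbours n. (f n - f m)\<^sup>2) \<le> (\<Sum>n\<in>T. 4 * (harm_cutoff_slope M (r n))\<^sup>2)"
    by (rule sum_mono)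
  also have "\<dots> \<le> (\<Sum>k\<le>M. (4 * real k + 2) * (4 * (harm_cutoff_slope M k)\<^sup>2))"
    unfolding T_def r_def by (rule l1_ball_finite_sum_le(2)[OF dim]) simp
  also have "\<dots> \<le> 4 * (6 * harm M / (harm M - 1)\<^sup>2)"
    using sum_harm_cutoff_slope_le[of M] by (simp add: sum_distrib_left[symmetric] mult.left_commute)
  finally show "(\<Sum>n\<in>T. \<Sum>m\<in>neighbours n. (f n - f m)\<^sup>2) \<le> 24 * harm M / (harm M - 1)\<^sup>2"
    by simp
qed

lemma recurrent_cutoff:
  fixes c :: "int ^ 'd"
  assumes dim: "CARD('d) \<le> 2" and "\<epsilon> > 0"
  obtains f T where "covers T f" and "\<forall>n. l1_norm (n - c) \<le> 1 \<longrightarrow> f n = 1"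
    and "(\<Sum>n\<in>T. \<Sum>m\<in>neighbours n. (f n - f m)\<^sup>2) \<le> \<epsilon>"
proof -
  have "((\<lambda>x::real. 24 * x / (x - 1)\<^sup>2) \<longlongrightarrow> 0) at_top"
    by real_asymp
  from filterlim_compose[OF this harm_at_top]
  have "\<forall>\<^sub>F M in sequentially. 2 \<le> M \<and> 24 * harm M / (harm M - 1)\<^sup>2 < \<epsilon>"
    by (intro eventually_conj eventually_ge_at_top order_tendstoD(2)[OF _ \<open>\<epsilon> > 0\<close>])
  then obtain M where M: "2 \<le> M" and small: "24 * harm M / (harm M - 1)\<^sup>2 < \<epsilon>"
    using eventually_happens'[OF sequentially_bot] by blast
  note cutoff = lattice_harm_cutoff_dirichlet_le[OF dim M, of c]
  have "\<forall>n. l1_norm (n - c) \<le> 1 \<longrightarrow> harm_cutoff M (nat (l1_norm (n - c))) = 1"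
    using harm_cutoff_eq_1[OF M] by (simp add: nat_le_iff)
  with cutoff small show ?thesis
    using that by fastforce
qed

section \<open>Vanishing of the potential\<close>

lemma abs_potential_at_site_le:
  assumes plus: "op_le (\<lambda>n. Q n + V n) E" and minus: "op_le (\<lambda>n. Q n - V n) E"
    and \<phi>: "finsupp \<phi>" "\<phi> n0 = p" "hop Q \<phi> n0 = E * p"
  shows "\<bar>V n0\<bar> * p\<^sup>2 * \<bar>2 * t + t\<^sup>2\<bar> \<le> 2 * energy_gap E Q \<phi> + t\<^sup>2 * p\<^sup>2 * \<bar>E - Q n0\<bar>"
proof -
  define \<phi>' where "\<phi>' = \<phi>(n0 := \<phi> n0 + t * p)"
  have "finsupp \<phi>'"
    using \<phi>(1) unfolding \<phi>'_def finsupp_def supp_def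
    by (auto intro: finite_subset[of _ "insert n0 {n. \<phi> n \<noteq> 0}"])
  have "potential_form V \<phi>' - potential_form V \<phi> = V n0 * p\<^sup>2 * (2 * t + t\<^sup>2)"
    using \<phi>(2) unfolding \<phi>'_def potential_form_point_update[OF \<phi>(1)]
    by (simp add: algebra_simps power2_eq_square)
  then have "\<bar>V n0\<bar> * p\<^sup>2 * \<bar>2 * t + t\<^sup>2\<bar> \<le> \<bar>potential_form V \<phi>'\<bar> + \<bar>potential_form V \<phi>\<bar>"
    by (metis abs_mult abs_power2 abs_triangle_ineq4)
  also have "\<dots> \<le> energy_gap E Q \<phi>' + energy_gap E Q \<phi>"
    using abs_potential_form_le_energy_gap[OF plus minus] \<phi>(1) \<open>finsupp \<phi>'\<close> by (intro add_mono)
  also have "energy_gap E Q \<phi>' = energy_gap E Q \<phi> + t\<^sup>2 * p\<^sup>2 * (E - Q n0)"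
    using \<phi>(2,3) unfolding \<phi>'_def energy_gap_point_update[OF \<phi>(1)]
    by (simp add: power_mult_distrib algebra_simps)
  also have "\<dots> \<le> energy_gap E Q \<phi> + t\<^sup>2 * p\<^sup>2 * \<bar>E - Q n0\<bar>"
    by (simp add: mult_left_mono)
  finally show ?thesis
    by simp
qed

lemma potential_vanishes_at_site:
  assumes plus: "op_le (\<lambda>n. Q n + V n) E" and minus: "op_le (\<lambda>n. Q n - V n) E"
    and trials: "\<And>\<epsilon>. \<epsilon> > 0 \<Longrightarrow>
      \<exists>\<phi>. finsupp \<phi> \<and> \<phi> n0 = p \<and> hop Q \<phi> n0 = E * p \<and> energy_gap E Q \<phi> \<le> \<epsilon>"
    and "p \<noteq> 0"
  shows "V n0 = 0"
proof -
  define a where "a = \<bar>V n0\<bar> * p\<^sup>2"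
  define K where "K = 2 + p\<^sup>2 * \<bar>E - Q n0\<bar>"
  have "a \<ge> 0" "K > 0"
    unfolding a_def K_def by (simp_all add: add_pos_nonneg)
  have "2 * a \<le> e" if "e > 0" for e
  proof -
    define t where "t = e / K"
    have "t > 0"
      using \<open>e > 0\<close> \<open>K > 0\<close> by (simp add: t_def)
    then obtain \<phi> where \<phi>: "finsupp \<phi>" "\<phi> n0 = p" "hop Q \<phi> n0 = E * p"
      and small: "energy_gap E Q \<phi> \<le> t\<^sup>2"
      using trials[of "t\<^sup>2"] by auto
    have "t * (a * (2 + t)) = a * \<bar>2 * t + t\<^sup>2\<bar>"
      using \<open>t > 0\<close> by (simp add: power2_eq_square algebra_simps)
    also have "\<dots> \<le> 2 * t\<^sup>2 + t\<^sup>2 * p\<^sup>2 * \<bar>E - Q n0\<bar>"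
      using abs_potential_at_site_le[OF plus minus \<phi>, of t] small unfolding a_def by linarith
    also have "\<dots> = t * (t * K)"
      by (simp add: K_def power2_eq_square algebra_simps)
    finally have "a * (2 + t) \<le> t * K"
      using \<open>t > 0\<close> by simp
    moreover have "a * 2 \<le> a * (2 + t)"
      using \<open>t > 0\<close> \<open>a \<ge> 0\<close> by (simp add: mult_left_mono)
    ultimately show ?thesis
      using \<open>K > 0\<close> by (simp add: t_def)
  qed
  then have "a = 0"
    using field_le_epsilon[of "2 * a" 0] \<open>a \<ge> 0\<close> by simp
  with \<open>p \<noteq> 0\<close> show ?thesis
    by (simp add: a_def)
qed

lemma ground_state_trial_functions:
  fixes \<psi> :: "int ^ 'd \<Rightarrow> real"
  assumes dim: "CARD('d) \<le> 2" and ground: "\<forall>n. hop Q \<psi> n = E * \<psi> n"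
    and bounds: "\<forall>n. 0 \<le> \<psi> n \<and> \<psi> n \<le> B" and "B > 0" and "\<epsilon> > 0"
  shows "\<exists>\<phi>. finsupp \<phi> \<and> \<phi> n0 = \<psi> n0 \<and> hop Q \<phi> n0 = E * \<psi> n0 \<and> energy_gap E Q \<phi> \<le> \<epsilon>"
proof -
  have "2 * \<epsilon> / B\<^sup>2 > 0"
    using \<open>\<epsilon> > 0\<close> \<open>B > 0\<close> by simp
  then obtain f T where T: "covers T f" and one: "\<forall>n. l1_norm (n - n0) \<le> 1 \<longrightarrow> f n = 1"
    and small: "(\<Sum>n\<in>T. \<Sum>m\<in>neighbours n. (f n - f m)\<^sup>2) \<le> 2 * \<epsilon> / B\<^sup>2"
    by (rule recurrent_cutoff[OF dim])
  define \<phi> where "\<phi> n = \<psi> n * f n" for n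
  have "finsupp \<phi>"
    using T unfolding covers_def finsupp_def supp_def \<phi>_def
    by (auto intro: finite_subset[of _ T])
  have at_n0: "\<phi> n0 = \<psi> n0"
    using one by (simp add: \<phi>_def l1_norm_def)
  have "\<forall>m\<in>neighbours n0. \<phi> m = \<psi> m"
    using one by (simp add: \<phi>_def neighbours_def nbr_def l1_norm_def)
  then have "hop Q \<phi> n0 = E * \<psi> n0"
    using hop_cong_local[of \<phi> n0 \<psi>] at_n0 ground by simp
  moreover have "energy_gap E Q \<phi> \<le> \<epsilon>"
  proof -
    have "energy_gap E Q \<phi> \<le> B\<^sup>2 / 2 * (\<Sum>n\<in>T. \<Sum>m\<in>neighbours n. (f n - f m)\<^sup>2)"
      unfolding \<phi>_def by (rule energy_gap_le_dirichlet[OF ground T bounds])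
    also have "\<dots> \<le> B\<^sup>2 / 2 * (2 * \<epsilon> / B\<^sup>2)"
      using small by (intro mult_left_mono) auto
    also have "\<dots> = \<epsilon>"
      using \<open>B > 0\<close> by simp
    finally show ?thesis .
  qed
  ultimately show ?thesis
    using \<open>finsupp \<phi>\<close> at_n0 by blast
qed

theorem theorem1p4:
  fixes Q V \<psi> :: "int ^ 'd \<Rightarrow> real"
  assumes dim: "CARD('d) = 1 \<or> CARD('d) = 2"
    and bdd: "bounded_above_op Q"
    and psi_pos: "\<forall>n. \<psi> n > 0"
    and psi_bdd: "\<exists>B. \<forall>n. \<psi> n \<le> B"
    and ground: "\<forall>n. hop Q \<psi> n = ground_energy Q * \<psi> n"
    and plus: "op_le (\<lambda>n. Q n + V n) (ground_energy Q)"
    and minus: "op_le (\<lambda>n. Q n - V n) (ground_energy Q)"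
  shows "V = (\<lambda>n. 0)"
proof
  fix n0 :: "int ^ 'd"
  have "CARD('d) \<le> 2"
    using dim by auto
  obtain B where "\<forall>n. 0 \<le> \<psi> n \<and> \<psi> n \<le> B" and "B > 0"
    using psi_pos psi_bdd by (meson less_imp_le less_le_trans)
  show "V n0 = 0"
  proof (rule potential_vanishes_at_site[OF plus minus])
    show "\<exists>\<phi>. finsupp \<phi> \<and> \<phi> n0 = \<psi> n0 \<and> hop Q \<phi> n0 = ground_energy Q * \<psi> n0
        \<and> energy_gap (ground_energy Q) Q \<phi> \<le> \<epsilon>" if "\<epsilon> > 0" for \<epsilon>
      by (rule ground_state_trial_functions) fact+
    show "\<psi> n0 \<noteq> 0"
      using psi_pos by (metis less_irrefl)
  qed
qed

end
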